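(* Let $n \ge 1$ and let $X_1,\dots,X_n$ be observations from $\mathcal{N}(\mu,1)$ with sample mean $\bar x$, and let $z=\sqrt{n}\,\bar x$. For a prior variance $\tau^2>0$ define the Bayes factor \[ \mathrm{BF}_{01}(\bar x;\tau^2) = \sqrt{1+n\tau^2}\,\exp\left\{-\frac{z^2}{2}\cdot\frac{n\tau^2}{1+n\tau^2}\right\}. \] Suppose the result is two-sided statistically significant at level $\alpha = 0.05$, i.e. $|z| > 1.96$. Let $\tau^{*2} = k^*/n$, where $k^*$ is the unique $k>0$ with $(1+k)\ln(1+k) = z^2 k$. Then there exist prior variances $\tau_1^2 < \tau^{*2} < \tau_2^2$ such that $\mathrm{BF}_{01}(\bar x;\tau_1^2) < 1$ and $\mathrm{BF}_{01}(\bar x;\tau_2^2) > 1$.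
   Context: Model: testing $H_0:\mu=0$ versus $H_1:\mu\neq0$ in the normal model with known variance $\sigma^2=1$, with prior probability $1/2$ on $H_0$ and prior $\mu\mid H_1\sim\mathcal{N}(0,\tau^2)$. $\mathrm{BF}_{01}$ is the Bayes factor in favour of $H_0$; $\mathrm{BF}_{01}<1$ is interpreted as concluding in favour of $H_1$ and $\mathrm{BF}_{01}>1$ as concluding in favour of $H_0$. The quantity $\tau^{*2}$ is the critical prior variance (flip point divided by $n$). *)

theory Defs
  imports "HOL-Analysis.Analysis"
begin

definition zstat :: "nat \<Rightarrow> real \<Rightarrow> real" where
  "zstat n xbar = sqrt (real n) * xbar"

definition BF01 :: "nat \<Rightarrow> real \<Rightarrow> real \<Rightarrow> real" where
  "BF01 n xbar tau2 =
     sqrt (1 + real n * tau2) *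
     exp (- ((zstat n xbar)^2 / 2) * (real n * tau2 / (1 + real n * tau2)))"

definition kstar :: "real \<Rightarrow> real" where
  "kstar z = (THE k. k > 0 \<and> (1 + k) * ln (1 + k) = z^2 * k)"

definition tau_star_sq :: "nat \<Rightarrow> real \<Rightarrow> real" where
  "tau_star_sq n xbar = kstar (zstat n xbar) / real n"

end

theory Submission
  imports Defs
begin

text \<open>With \<open>k = n \<tau>\<^sup>2\<close> the Bayes factor equals
  \<open>exp (k (g k - z\<^sup>2) / (2 (1 + k)))\<close>, where \<open>g k = (1 + k) ln (1 + k) / k\<close>.
  Since \<open>ln (1 + k) < k\<close>, the function \<open>g\<close> is strictly increasing on \<open>(0, \<infinity>)\<close>, and the flip
  point \<open>k\<^sup>*\<close> is the unique solution of \<open>g k = z\<^sup>2\<close>, which exists as soon as \<open>z\<^sup>2 > 1\<close>.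
  Hence \<open>BF\<^sub>0\<^sub>1 < 1\<close> exactly for \<open>\<tau>\<^sup>2 < \<tau>\<^sup>*\<^sup>2\<close> and \<open>BF\<^sub>0\<^sub>1 > 1\<close> exactly for \<open>\<tau>\<^sup>2 > \<tau>\<^sup>*\<^sup>2\<close>;
  significance at level 0.05 gives \<open>z\<^sup>2 > 1.96\<^sup>2 > 1\<close>.\<close>

definition flip_ratio :: "real \<Rightarrow> real" where
  "flip_ratio k = (1 + k) * ln (1 + k) / k"

lemma flip_ratio_has_real_derivative:
  assumes "0 < k"
  shows "(flip_ratio has_real_derivative (k - ln (1 + k)) / k\<^sup>2) (at k)"
proof -
  have "((\<lambda>k. (1 + k) * ln (1 + k) / k) has_real_derivative
      ((ln (1 + k) + (1 + k) * (1 / (1 + k))) * k - (1 + k) * ln (1 + k)) / (k * k)) (at k)"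
    using assms by (auto intro!: derivative_eq_intros)
  moreover have "((ln (1 + k) + (1 + k) * (1 / (1 + k))) * k - (1 + k) * ln (1 + k)) / (k * k)
      = (k - ln (1 + k)) / k\<^sup>2"
    using assms by (simp add: field_simps power2_eq_square)
  ultimately show ?thesis
    unfolding flip_ratio_def[abs_def] by simp
qed

lemma strict_mono_on_flip_ratio: "strict_mono_on {0<..} flip_ratio"
proof (rule strict_mono_onI)
  fix a b :: real
  assume "a \<in> {0<..}" "a < b"
  show "flip_ratio a < flip_ratio b"
  proof (rule DERIV_pos_imp_increasing[OF \<open>a < b\<close>])
    fix x assume "a \<le> x"
    with \<open>a \<in> {0<..}\<close> have "0 < x" by simp
    then have "0 < (x - ln (1 + x)) / x\<^sup>2"
      using ln_add_one_self_less_self by simp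
    then show "\<exists>y. (flip_ratio has_real_derivative y) (at x) \<and> 0 < y"
      using flip_ratio_has_real_derivative[OF \<open>0 < x\<close>] by blast
  qed
qed

lemma flip_equation_iff:
  assumes "0 < k"
  shows "(1 + k) * ln (1 + k) = c * k \<longleftrightarrow> flip_ratio k = c"
  using assms by (auto simp: flip_ratio_def field_simps)

text \<open>The root lies between \<open>(c - 1) / 2\<close>, where \<open>ln (1 + k) \<le> k\<close> makes the left-hand side
  too small, and \<open>exp c - 1\<close>, where it exceeds \<open>c k\<close> by exactly \<open>c\<close>.\<close>

lemma flip_equation_has_root:
  fixes c :: real
  assumes "1 < c"
  shows "\<exists>k>0. (1 + k) * ln (1 + k) = c * k"
proof -
  define f where "f k = (1 + k) * ln (1 + k) - c * k" for k
  define a where "a = (c - 1) / 2"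
  define b where "b = exp c - 1"
  have "0 < a" using assms by (simp add: a_def)
  have "ln (1 + a) \<le> a"
    using \<open>0 < a\<close> by (simp add: ln_add_one_self_le_self)
  then have "f a \<le> (1 + a) * a - c * a"
    unfolding f_def using \<open>0 < a\<close> by (simp add: mult_left_mono)
  also have "\<dots> = a * (1 + a - c)"
    by (simp add: algebra_simps)
  also have "\<dots> < 0"
    using \<open>0 < a\<close> assms by (intro mult_pos_neg) (simp_all add: a_def field_simps)
  finally have "f a \<le> 0" by simp
  have "0 \<le> f b"
    using assms by (simp add: f_def b_def algebra_simps)
  have "c \<le> b"
    unfolding b_def using exp_ge_add_one_self[of c] by arith
  with assms have "a \<le> b"
    by (simp add: a_def)
  have "\<forall>x. a \<le> x \<and> x \<le> b \<longrightarrow> isCont f x"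
    using \<open>0 < a\<close> unfolding f_def by (auto intro!: continuous_intros)
  with IVT[OF \<open>f a \<le> 0\<close> \<open>0 \<le> f b\<close> \<open>a \<le> b\<close>]
  obtain k where "a \<le> k" "f k = 0"
    by blast
  with \<open>0 < a\<close> show ?thesis
    by (intro exI[of _ k]) (simp add: f_def)
qed

lemma kstar_flip_ratio:
  assumes "1 < z\<^sup>2"
  shows "0 < kstar z" and "flip_ratio (kstar z) = z\<^sup>2"
proof -
  have "\<exists>!k. 0 < k \<and> (1 + k) * ln (1 + k) = z\<^sup>2 * k"
  proof (rule ex_ex1I)
    show "\<exists>k. 0 < k \<and> (1 + k) * ln (1 + k) = z\<^sup>2 * k"
      using flip_equation_has_root[OF assms] by blast
  next
    fix k k'
    assume "0 < k \<and> (1 + k) * ln (1 + k) = z\<^sup>2 * k"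
      and "0 < k' \<and> (1 + k') * ln (1 + k') = z\<^sup>2 * k'"
    then show "k = k'"
      using strict_mono_on_eqD[OF strict_mono_on_flip_ratio, of k' k]
      by (auto simp: flip_equation_iff)
  qed
  then have "0 < kstar z \<and> (1 + kstar z) * ln (1 + kstar z) = z\<^sup>2 * kstar z"
    unfolding kstar_def by (rule theI')
  then show "0 < kstar z" and "flip_ratio (kstar z) = z\<^sup>2"
    by (auto simp: flip_equation_iff)
qed

lemma BF01_eq_exp_flip_ratio:
  fixes n :: nat and xbar tau2 :: real
  assumes "0 \<le> tau2"
  defines "k \<equiv> real n * tau2"
  shows "BF01 n xbar tau2 = exp (k * (flip_ratio k - (zstat n xbar)\<^sup>2) / (2 * (1 + k)))"
proof -
  have "0 \<le> k" using assms by (simp add: k_def)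
  then have "sqrt (1 + k) = exp (ln (1 + k) / 2)"
    by (simp add: powr_half_sqrt[symmetric] powr_def)
  moreover have "k * flip_ratio k = (1 + k) * ln (1 + k)"
    by (cases "k = 0") (simp_all add: flip_ratio_def)
  ultimately show ?thesis
    unfolding BF01_def k_def[symmetric] using \<open>0 \<le> k\<close>
    by (simp add: exp_add[symmetric] field_simps right_diff_distrib)
qed

lemma
  assumes "0 < n" "0 < tau2" "1 < (zstat n xbar)\<^sup>2"
  shows BF01_less_one_iff: "BF01 n xbar tau2 < 1 \<longleftrightarrow> tau2 < tau_star_sq n xbar"
    and BF01_greater_one_iff: "BF01 n xbar tau2 > 1 \<longleftrightarrow> tau_star_sq n xbar < tau2"
proof -
  define k where "k = real n * tau2"
  define k' where "k' = kstar (zstat n xbar)"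
  have "0 < k" "0 < k'"
    using assms kstar_flip_ratio(1) by (simp_all add: k_def k'_def)
  then have "0 < 1 + k" by simp
  have BF: "BF01 n xbar tau2 = exp (k * (flip_ratio k - flip_ratio k') / (2 * (1 + k)))"
    using BF01_eq_exp_flip_ratio[of tau2 n xbar] assms kstar_flip_ratio(2)
    by (simp add: k_def k'_def)
  have flip_less: "flip_ratio k < flip_ratio k' \<longleftrightarrow> k < k'"
    and flip_greater: "flip_ratio k' < flip_ratio k \<longleftrightarrow> k' < k"
    using strict_mono_on_less[OF strict_mono_on_flip_ratio] \<open>0 < k\<close> \<open>0 < k'\<close> by simp_all
  have tau_star: "tau_star_sq n xbar = k' / real n"
    by (simp add: tau_star_sq_def k'_def)
  have "BF01 n xbar tau2 < 1 \<longleftrightarrow> k * (flip_ratio k - flip_ratio k') < 0"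
    unfolding BF using \<open>0 < 1 + k\<close> by (simp add: divide_less_0_iff)
  also have "\<dots> \<longleftrightarrow> k < k'"
    using \<open>0 < k\<close> flip_less by (simp add: mult_less_0_iff)
  also have "\<dots> \<longleftrightarrow> tau2 < tau_star_sq n xbar"
    using \<open>0 < n\<close> by (simp add: tau_star k_def pos_less_divide_eq mult.commute)
  finally show "BF01 n xbar tau2 < 1 \<longleftrightarrow> tau2 < tau_star_sq n xbar" .
  have "BF01 n xbar tau2 > 1 \<longleftrightarrow> 0 < k * (flip_ratio k - flip_ratio k')"
    unfolding BF using \<open>0 < 1 + k\<close> by (simp add: zero_less_divide_iff)
  also have "\<dots> \<longleftrightarrow> k' < k"
    using \<open>0 < k\<close> flip_greater by (simp add: zero_less_mult_iff)
  also have "\<dots> \<longleftrightarrow> tau_star_sq n xbar < tau2"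
    using \<open>0 < n\<close> by (simp add: tau_star k_def pos_divide_less_eq mult.commute)
  finally show "BF01 n xbar tau2 > 1 \<longleftrightarrow> tau_star_sq n xbar < tau2" .
qed

theorem theorem2:
  fixes n :: nat and xbar :: real
  assumes "n \<ge> 1"
    and "\<bar>zstat n xbar\<bar> > 1.96"
  shows "\<exists>tau1 tau2. 0 < tau1 \<and> tau1 < tau_star_sq n xbar \<and> tau_star_sq n xbar < tau2
           \<and> BF01 n xbar tau1 < 1 \<and> BF01 n xbar tau2 > 1"
proof -
  have "1.96\<^sup>2 < \<bar>zstat n xbar\<bar>\<^sup>2"
    using assms(2) by (intro power_strict_mono) auto
  then have z: "1 < (zstat n xbar)\<^sup>2" by (simp add: power2_eq_square)
  have "0 < n" using assms(1) by simp
  define t where "t = tau_star_sq n xbar"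
  have "0 < t"
    using kstar_flip_ratio(1)[OF z] \<open>0 < n\<close> by (simp add: t_def tau_star_sq_def)
  then have "BF01 n xbar (t / 2) < 1" "BF01 n xbar (2 * t) > 1"
    using BF01_less_one_iff[OF \<open>0 < n\<close> _ z] BF01_greater_one_iff[OF \<open>0 < n\<close> _ z]
    by (simp_all add: t_def)
  with \<open>0 < t\<close> show ?thesis
    unfolding t_def[symmetric] by (intro exI[of _ "t / 2"] exI[of _ "2 * t"]) simp
qed

end
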